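(* Let $G$ be a finite set of items, $k=|G|$, and $1\le m\le k$. Then there exist quasi-fields $\Sigma,\Sigma'\subseteq 2^G$ with $|\Sigma|=|\Sigma'|=2^m$, a set of agents, and a type profile $\theta$ such that $$\frac{W_{\max}(\theta^{\Sigma})}{W_{\max}(\theta^{\Sigma'})}\ge\frac{m}{\lceil m^2/k\rceil}.$$
   Context: Combinatorial auction: a finite set $G$ of items and agents $N$; an outcome assigns pairwise disjoint bundles $o_i\subseteq G$ to the agents. A type $\theta_i$ of agent $i$ is a valuation $v_i(\cdot,\theta_i):2^G\to\mathbb{R}_{\ge0}$ with $v_i(\emptyset,\theta_i)=0$ and $v_i(B,\theta_i)\le v_i(C,\theta_i)$ whenever $B\subseteq C$. For a profile $x$ of bid functions $x_i:2^G\to\mathbb{R}$, $W_{\max}(x)=\max_{o}\sum_i x_i(o_i)$ over all outcomes $o$. A set $\Sigma\subseteq 2^G$ with $\emptyset\in\Sigma$ is a quasi-field if $B\in\Sigma$ implies $G\setminus B\in\Sigma$, and $B,C\in\Sigma$ with $B\cap C=\emptyset$ implies $B\cup C\in\Sigma$. For a quasi-field $\Sigma$ the projection of a valuation $x_i$ is $x_i^\Sigma(B)=\max_{B'\in\Sigma,\,B'\subseteq B}x_i(B')$, and $\theta^\Sigma$ denotes the profile of projected true valuations $(v_i(\cdot,\theta_i)^\Sigma)_{i}$. *)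

theory Defs
  imports "HOL-Analysis.Analysis"
begin

definition quasi_field :: "'g set \<Rightarrow> 'g set set \<Rightarrow> bool" where
  "quasi_field G \<Sigma> \<longleftrightarrow> \<Sigma> \<subseteq> Pow G \<and> {} \<in> \<Sigma> \<and>
     (\<forall>B\<in>\<Sigma>. G - B \<in> \<Sigma>) \<and>
     (\<forall>B\<in>\<Sigma>. \<forall>C\<in>\<Sigma>. B \<inter> C = {} \<longrightarrow> B \<union> C \<in> \<Sigma>)"

definition valuation :: "'g set \<Rightarrow> ('g set \<Rightarrow> real) \<Rightarrow> bool" where
  "valuation G v \<longleftrightarrow> v {} = 0 \<and> (\<forall>B\<subseteq>G. v B \<ge> 0) \<and>
     (\<forall>B C. B \<subseteq> C \<and> C \<subseteq> G \<longrightarrow> v B \<le> v C)"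

definition outcomes :: "'g set \<Rightarrow> 'a set \<Rightarrow> ('a \<Rightarrow> 'g set) set" where
  "outcomes G N = {ou. (\<forall>i\<in>N. ou i \<subseteq> G) \<and> (\<forall>i. i \<notin> N \<longrightarrow> ou i = {}) \<and>
     (\<forall>i\<in>N. \<forall>j\<in>N. i \<noteq> j \<longrightarrow> ou i \<inter> ou j = {})}"

definition W_max :: "'g set \<Rightarrow> 'a set \<Rightarrow> ('a \<Rightarrow> 'g set \<Rightarrow> real) \<Rightarrow> real" where
  "W_max G N x = Max ((\<lambda>ou. \<Sum>i\<in>N. x i (ou i)) ` outcomes G N)"

definition proj :: "'g set set \<Rightarrow> ('g set \<Rightarrow> real) \<Rightarrow> 'g set \<Rightarrow> real" where
  "proj \<Sigma> x B = Max (x ` {B'\<in>\<Sigma>. B' \<subseteq> B})"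

end

theory Submission
  imports Defs
begin

text \<open>Let \<open>P\<close> and \<open>P'\<close> be partitions of \<open>G\<close> into \<open>m\<close> blocks each; the unions of their
  blocks form quasi-fields with \<open>2^m\<close> elements. Let \<open>R \<in> P'\<close> and give every block of \<open>P\<close>
  meeting \<open>R\<close> a single-minded bidder of value 1. Projected onto the quasi-field of \<open>P\<close>,
  all these bidders can be served at once; projected onto that of \<open>P'\<close>, every bundle
  a bidder accepts contains all of \<open>R\<close>, so at most one of them is served.
  Taking for \<open>R\<close> the first \<open>k - m + 1\<close> items of an enumeration of \<open>G\<close> (with singletons as
  the other blocks of \<open>P'\<close>) and for \<open>P\<close> the residue classes modulo \<open>m\<close>, the first
  \<open>min m (k - m + 1) \<ge> m / \<lceil>m\<^sup>2 / k\<rceil>\<close> classes meet \<open>R\<close>.\<close>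

lemma inj_on_Union_Pow_partition:
  assumes "partition_on G P"
  shows "inj_on Union (Pow P)"
proof (rule inj_onI)
  have sub: "S \<subseteq> T" if "S \<subseteq> P" "T \<subseteq> P" "\<Union>S = \<Union>T" for S T
  proof
    fix B assume "B \<in> S"
    moreover have "B \<noteq> {}" using \<open>B \<in> S\<close> \<open>S \<subseteq> P\<close> partition_onD3[OF assms] by blast
    ultimately obtain x C where "x \<in> B" "x \<in> C" "C \<in> T" using \<open>\<Union>S = \<Union>T\<close> by blast
    then have "B = C"
      using \<open>B \<in> S\<close> that(1,2) disjointD[OF partition_onD2[OF assms]] by blast
    with \<open>C \<in> T\<close> show "B \<in> T" by simp
  qed
  fix S T assume "S \<in> Pow P" "T \<in> Pow P" "\<Union>S = \<Union>T"
  then show "S = T" using sub[of S T] sub[of T S] by auto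
qed

lemma card_Union_Pow_partition:
  assumes "finite G" "partition_on G P"
  shows "card (Union ` Pow P) = 2 ^ card P"
  using assms by (simp add: card_image[OF inj_on_Union_Pow_partition] card_Pow finite_elements)

lemma quasi_field_Union_Pow_partition:
  assumes "partition_on G P"
  shows "quasi_field G (Union ` Pow P)"
  unfolding quasi_field_def
proof (intro conjI ballI impI)
  show "Union ` Pow P \<subseteq> Pow G" "{} \<in> Union ` Pow P"
    using partition_onD1[OF assms] by auto
next
  fix B assume "B \<in> Union ` Pow P"
  then obtain S where "S \<subseteq> P" "B = \<Union>S" by blast
  then have "G - B = \<Union>(P - S)"
    using diff_Union_pairwise_disjoint[OF partition_onD2[OF assms]] partition_onD1[OF assms] by simp
  then show "G - B \<in> Union ` Pow P" by blast
next
  fix B C assume "B \<in> Union ` Pow P" "C \<in> Union ` Pow P"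
  then obtain S T where "S \<subseteq> P" "T \<subseteq> P" "B \<union> C = \<Union>(S \<union> T)" by blast
  then show "B \<union> C \<in> Union ` Pow P" by blast
qed

lemma partition_block_subset_Union:
  assumes "partition_on G P" "R \<in> P" "S \<subseteq> P" "R \<inter> \<Union>S \<noteq> {}"
  shows "R \<subseteq> \<Union>S"
proof
  fix x assume "x \<in> R"
  from assms(4) obtain y C where "y \<in> R" "y \<in> C" "C \<in> S" by blast
  with assms(2,3) have "R = C" using disjointD[OF partition_onD2[OF assms(1)]] by blast
  with \<open>x \<in> R\<close> \<open>C \<in> S\<close> show "x \<in> \<Union>S" by blast
qed

lemma finite_outcomes:
  assumes "finite G" "finite N"
  shows "finite (outcomes G N)"
proof (rule finite_subset)
  show "outcomes G N \<subseteq> {f. \<forall>i. (i \<in> N \<longrightarrow> f i \<in> Pow G) \<and> (i \<notin> N \<longrightarrow> f i = {})}"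
    unfolding outcomes_def by auto
  show "finite {f. \<forall>i. (i \<in> N \<longrightarrow> f i \<in> Pow G) \<and> (i \<notin> N \<longrightarrow> f i = {})}"
    using finite_set_of_finite_funs[of N "Pow G" "{}"] assms by simp
qed

lemma welfare_le_W_max:
  assumes "finite G" "finite N" "ou \<in> outcomes G N"
  shows "(\<Sum>i\<in>N. x i (ou i)) \<le> W_max G N x"
  unfolding W_max_def using assms finite_outcomes by (intro Max_ge) auto

lemma W_max_le:
  assumes "finite G" "finite N" "\<And>ou. ou \<in> outcomes G N \<Longrightarrow> (\<Sum>i\<in>N. x i (ou i)) \<le> c"
  shows "W_max G N x \<le> c"
proof -
  have "(\<lambda>i. {}) \<in> outcomes G N" unfolding outcomes_def by auto
  then show ?thesis
    unfolding W_max_def using assms finite_outcomes by (subst Max_le_iff) auto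
qed

definition single_minded :: "'g set \<Rightarrow> 'g set \<Rightarrow> real" where
  "single_minded A B = (if A \<subseteq> B then 1 else 0)"

lemma valuation_single_minded:
  assumes "A \<noteq> {}"
  shows "valuation G (single_minded A)"
  using assms unfolding valuation_def single_minded_def by auto

lemma proj_single_minded:
  assumes "finite \<Sigma>" "{} \<in> \<Sigma>"
  shows "proj \<Sigma> (single_minded A) B = (if \<exists>C\<in>\<Sigma>. A \<subseteq> C \<and> C \<subseteq> B then 1 else 0)"
proof -
  have "proj \<Sigma> (single_minded A) B \<in> single_minded A ` {C\<in>\<Sigma>. C \<subseteq> B}"
    unfolding proj_def using assms by (intro Max_in) auto
  moreover have "single_minded A C \<le> proj \<Sigma> (single_minded A) B" if "C \<in> \<Sigma>" "C \<subseteq> B" for C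
    unfolding proj_def using assms that by (intro Max_ge) auto
  ultimately show ?thesis
    unfolding single_minded_def by (smt (verit) image_iff mem_Collect_eq)
qed

lemma W_max_single_minded_ge_card:
  assumes "finite G" "finite N" "finite \<Sigma>" "{} \<in> \<Sigma>"
    and "\<And>i. i \<in> N \<Longrightarrow> A i \<in> \<Sigma> \<and> A i \<subseteq> G" and "disjoint_family_on A N"
  shows "real (card N) \<le> W_max G N (\<lambda>i. proj \<Sigma> (single_minded (A i)))"
proof -
  define ou where "ou i = (if i \<in> N then A i else {})" for i
  have served: "\<exists>C\<in>\<Sigma>. A i \<subseteq> C \<and> C \<subseteq> ou i" if "i \<in> N" for i
    using assms(5)[OF that] that unfolding ou_def by auto
  have "ou \<in> outcomes G N"
    using assms(5,6) unfolding outcomes_def ou_def disjoint_family_on_def by auto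
  moreover have "(\<Sum>i\<in>N. proj \<Sigma> (single_minded (A i)) (ou i)) = card N"
    using served by (simp add: proj_single_minded[OF assms(3,4)])
  ultimately show ?thesis
    using welfare_le_W_max[OF assms(1,2)] by metis
qed

lemma W_max_single_minded_ge_1:
  assumes "finite G" "finite N" "N \<noteq> {}" "finite \<Sigma>" "{} \<in> \<Sigma>" "G \<in> \<Sigma>"
    and "\<And>i. i \<in> N \<Longrightarrow> A i \<subseteq> G"
  shows "1 \<le> W_max G N (\<lambda>i. proj \<Sigma> (single_minded (A i)))"
proof -
  obtain i0 where "i0 \<in> N" using assms(3) by blast
  define ou where "ou i = (if i = i0 then G else {})" for i
  have "ou \<in> outcomes G N"
    using \<open>i0 \<in> N\<close> unfolding outcomes_def ou_def by auto
  have "1 = proj \<Sigma> (single_minded (A i0)) (ou i0)"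
    using assms(6,7) \<open>i0 \<in> N\<close> by (auto simp: proj_single_minded[OF assms(4,5)] ou_def)
  also have "\<dots> \<le> (\<Sum>i\<in>N. proj \<Sigma> (single_minded (A i)) (ou i))"
    using \<open>i0 \<in> N\<close> assms(2) by (intro member_le_sum) (simp_all add: proj_single_minded[OF assms(4,5)])
  also have "\<dots> \<le> W_max G N (\<lambda>i. proj \<Sigma> (single_minded (A i)))"
    by (rule welfare_le_W_max[OF assms(1,2) \<open>ou \<in> outcomes G N\<close>])
  finally show ?thesis .
qed

lemma W_max_single_minded_le_1:
  assumes "finite G" "finite N" "finite \<Sigma>" "{} \<in> \<Sigma>" "R \<noteq> {}"
    and "\<And>i C. i \<in> N \<Longrightarrow> C \<in> \<Sigma> \<Longrightarrow> A i \<subseteq> C \<Longrightarrow> R \<subseteq> C"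
  shows "W_max G N (\<lambda>i. proj \<Sigma> (single_minded (A i))) \<le> 1"
proof (rule W_max_le[OF assms(1,2)])
  fix ou assume ou: "ou \<in> outcomes G N"
  define served where "served = {i\<in>N. \<exists>C\<in>\<Sigma>. A i \<subseteq> C \<and> C \<subseteq> ou i}"
  have "R \<subseteq> ou i" if "i \<in> served" for i
    using that assms(6) unfolding served_def by blast
  then have "a = b" if "a \<in> served" "b \<in> served" for a b
    using that ou assms(5) unfolding outcomes_def served_def by blast
  then have "card served \<le> 1"
    by (simp add: card_le_Suc0_iff_eq assms(2) served_def)
  moreover have "(\<Sum>i\<in>N. proj \<Sigma> (single_minded (A i)) (ou i)) = card served"
    using assms(2) by (simp add: proj_single_minded[OF assms(3,4)] served_def sum.If_cases Collect_conj_eq Int_commute)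
  ultimately show "(\<Sum>i\<in>N. proj \<Sigma> (single_minded (A i)) (ou i)) \<le> 1" by simp
qed

lemma partition_on_residue_classes:
  fixes k m :: nat
  assumes "0 < m" "m \<le> k"
  shows "partition_on {..<k} ((\<lambda>j. {x\<in>{..<k}. x mod m = j}) ` {..<m})"
proof (rule partition_onI)
  show "\<Union>((\<lambda>j. {x\<in>{..<k}. x mod m = j}) ` {..<m}) = {..<k}"
    using assms by auto
  show "{} \<notin> (\<lambda>j. {x\<in>{..<k}. x mod m = j}) ` {..<m}"
  proof
    assume "{} \<in> (\<lambda>j. {x\<in>{..<k}. x mod m = j}) ` {..<m}"
    then obtain j where "j < m" "{x\<in>{..<k}. x mod m = j} = {}" by blast
    moreover have "j \<in> {x\<in>{..<k}. x mod m = j}" using \<open>j < m\<close> assms(2) by simp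
    ultimately show False by blast
  qed
qed (auto simp: disjnt_def)

lemma exists_partitions_with_block_meeting_many:
  assumes "finite G" "1 \<le> m" "m \<le> card G"
  obtains P P' R where "partition_on G P" "card P = m" "partition_on G P'" "card P' = m"
    "R \<in> P'" "min m (card G - m + 1) \<le> card {A\<in>P. A \<inter> R \<noteq> {}}"
proof -
  define k where "k = card G"
  obtain f where "bij_betw f {..<k} G"
    using ex_bij_betw_nat_finite[OF assms(1)] by (auto simp: k_def atLeast0LessThan)
  then have f: "inj_on f {..<k}" "f ` {..<k} = G" by (auto simp: bij_betw_def)
  define C where "C j = {x\<in>{..<k}. x mod m = j}" for j
  define P where "P = (\<lambda>j. f ` C j) ` {..<m}"
  define R where "R = f ` {..<k - m + 1}"
  define P' where "P' = insert R ((\<lambda>x. {x}) ` (G - R))"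
  have "0 < m" "m \<le> k" using assms by (simp_all add: k_def)
  have C_self: "j \<in> C j" if "j < m" for j
    using that \<open>m \<le> k\<close> by (simp add: C_def)
  have inj_blocks: "inj_on (\<lambda>j. f ` C j) {..<m}"
  proof (rule inj_onI)
    fix i j assume "i \<in> {..<m}" "j \<in> {..<m}" "f ` C i = f ` C j"
    then have "f i \<in> f ` C j" using C_self by blast
    moreover have "C j \<subseteq> {..<k}" "i \<in> {..<k}" using \<open>i \<in> {..<m}\<close> \<open>m \<le> k\<close> by (auto simp: C_def)
    ultimately have "i \<in> C j" using inj_on_image_mem_iff[OF f(1)] by blast
    then show "i = j" using \<open>i \<in> {..<m}\<close> by (simp add: C_def)
  qed
  have "partition_on G P"
  proof -
    have "partition_on (f ` {..<k}) ((`) f ` C ` {..<m} - {{}})"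
      using partition_on_inj_image[OF partition_on_residue_classes[OF \<open>0 < m\<close> \<open>m \<le> k\<close>] f(1)]
      by (simp add: C_def)
    moreover have "(`) f ` C ` {..<m} - {{}} = P"
      using C_self by (auto simp: P_def)
    ultimately show ?thesis using f(2) by simp
  qed
  moreover have "card P = m"
    using card_image[OF inj_blocks] by (simp add: P_def)
  moreover have "{..<k - m + 1} \<subseteq> {..<k}" using \<open>0 < m\<close> \<open>m \<le> k\<close> by auto
  then have "R \<subseteq> G" "R \<noteq> {}" "card R = k - m + 1"
    using f unfolding R_def by (auto simp: card_image inj_on_subset)
  then have "partition_on G P'"
    unfolding P'_def
    by (subst partition_on_insert) (simp_all add: disjnt_def partition_on_singletons)
  moreover have "card P' = m"
  proof -
    have "R \<notin> (\<lambda>x. {x}) ` (G - R)" using \<open>R \<noteq> {}\<close> by auto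
    moreover have "card (G - R) = m - 1"
      using \<open>R \<subseteq> G\<close> \<open>card R = k - m + 1\<close> assms by (simp add: card_Diff_subset finite_subset k_def)
    ultimately show ?thesis
      using assms(1,2) by (simp add: P'_def card_image)
  qed
  moreover have "R \<in> P'" by (simp add: P'_def)
  moreover have "min m (k - m + 1) \<le> card {A\<in>P. A \<inter> R \<noteq> {}}"
  proof -
    have "f j \<in> f ` C j \<inter> R" if "j < min m (k - m + 1)" for j
      using that C_self by (simp add: R_def)
    then have "(\<lambda>j. f ` C j) ` {..<min m (k - m + 1)} \<subseteq> {A\<in>P. A \<inter> R \<noteq> {}}"
      unfolding P_def by fastforce
    moreover have "card ((\<lambda>j. f ` C j) ` {..<min m (k - m + 1)}) = min m (k - m + 1)"
      by (simp add: card_image inj_on_subset[OF inj_blocks])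
    moreover have "finite {A\<in>P. A \<inter> R \<noteq> {}}" by (simp add: P_def)
    ultimately show ?thesis by (metis card_mono)
  qed
  ultimately show thesis using that by (simp add: k_def)
qed

lemma div_ceiling_square_div_le_min:
  fixes m k :: nat
  assumes "1 \<le> m" "m \<le> k"
  shows "real m / real (nat \<lceil>real (m ^ 2) / real k\<rceil>) \<le> real (min m (k - m + 1))"
proof -
  define c where "c = real (nat \<lceil>real (m ^ 2) / real k\<rceil>)"
  have "0 < real (m ^ 2) / real k" using assms by simp
  then have "0 < \<lceil>real (m ^ 2) / real k\<rceil>" by simp
  then have c: "real (m ^ 2) / real k \<le> c" "1 \<le> c"
    unfolding c_def by linarith+
  have "real k \<le> real (k - m + 1) * real m"
  proof -
    have "0 \<le> (real m - 1) * (real k - real m)" using assms by simp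
    then show ?thesis using assms by (simp add: of_nat_diff algebra_simps)
  qed
  then have "real k * real m \<le> real (k - m + 1) * real m * real m"
    by (rule mult_right_mono) simp
  then have "real k * real m \<le> real (k - m + 1) * real (m ^ 2)"
    by (simp add: power2_eq_square mult.assoc)
  then have "real m \<le> real (k - m + 1) * (real (m ^ 2) / real k)"
    using assms by (simp add: field_simps)
  also have "\<dots> \<le> real (k - m + 1) * c"
    using c by (intro mult_left_mono) auto
  finally have "real m \<le> real (k - m + 1) * c" .
  moreover have "real m \<le> real m * c"
    using c(2) mult_left_mono[of 1 c "real m"] by simp
  ultimately have "real m \<le> real (min m (k - m + 1)) * c"
    by (simp add: min_def)
  then show ?thesis
    using c(2) by (simp add: c_def divide_le_eq)
qed

lemma W_max_single_minded_blocks_ge_card: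
  assumes "finite G" "finite N" "partition_on G P" "inj_on A N" "A ` N \<subseteq> P"
  shows "real (card N) \<le> W_max G N (\<lambda>i. proj (Union ` Pow P) (single_minded (A i)))"
proof (rule W_max_single_minded_ge_card[OF assms(1,2)])
  show "finite (Union ` Pow P)" "{} \<in> Union ` Pow P"
    using finite_elements[OF assms(1,3)] by auto
  show "A i \<in> Union ` Pow P \<and> A i \<subseteq> G" if "i \<in> N" for i
    using assms(5) that partition_onD1[OF assms(3)] by (auto intro: image_eqI[of _ _ "{A i}"])
  show "disjoint_family_on A N"
    unfolding disjoint_family_on_def
  proof (intro ballI impI)
    fix i j assume "i \<in> N" "j \<in> N" "i \<noteq> j"
    then have "A i \<noteq> A j" "A i \<in> P" "A j \<in> P"
      using assms(4,5) by (auto dest: inj_onD)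
    then show "A i \<inter> A j = {}"
      using disjointD[OF partition_onD2[OF assms(3)]] by blast
  qed
qed

lemma W_max_single_minded_meeting_block_eq_1:
  assumes "finite G" "finite N" "N \<noteq> {}" "partition_on G P'" "R \<in> P'"
    and "\<And>i. i \<in> N \<Longrightarrow> A i \<subseteq> G \<and> A i \<inter> R \<noteq> {}"
  shows "W_max G N (\<lambda>i. proj (Union ` Pow P') (single_minded (A i))) = 1"
proof -
  have fin: "finite (Union ` Pow P')" and empty: "{} \<in> Union ` Pow P'"
    using finite_elements[OF assms(1,4)] by auto
  have "R \<noteq> {}" using partition_onD3[OF assms(4)] assms(5) by blast
  have "R \<subseteq> C" if "i \<in> N" "C \<in> Union ` Pow P'" "A i \<subseteq> C" for i C
  proof -
    obtain S where "S \<subseteq> P'" "C = \<Union>S" using \<open>C \<in> Union ` Pow P'\<close> by blast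
    moreover have "R \<inter> C \<noteq> {}" using assms(6)[OF \<open>i \<in> N\<close>] \<open>A i \<subseteq> C\<close> by blast
    ultimately show "R \<subseteq> C" using partition_block_subset_Union[OF assms(4,5)] by simp
  qed
  then have "W_max G N (\<lambda>i. proj (Union ` Pow P') (single_minded (A i))) \<le> 1"
    by (rule W_max_single_minded_le_1[OF assms(1,2) fin empty \<open>R \<noteq> {}\<close>])
  moreover have "1 \<le> W_max G N (\<lambda>i. proj (Union ` Pow P') (single_minded (A i)))"
    using partition_onD1[OF assms(4)] assms(6)
    by (intro W_max_single_minded_ge_1[OF assms(1-3) fin empty]) auto
  ultimately show ?thesis by (rule antisym)
qed

lemma welfare_gap_of_partitions:
  fixes G :: "'g set"
  assumes "finite G" "partition_on G P" "partition_on G P'" "R \<in> P'"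
  obtains N :: "nat set" and v where "finite N" "N \<noteq> {}" "\<forall>i\<in>N. valuation G (v i)"
    "W_max G N (\<lambda>i. proj (Union ` Pow P') (v i)) = 1"
    "real (card {A\<in>P. A \<inter> R \<noteq> {}}) \<le> W_max G N (\<lambda>i. proj (Union ` Pow P) (v i))"
proof -
  define Q where "Q = {A\<in>P. A \<inter> R \<noteq> {}}"
  have "finite Q" using finite_elements[OF assms(1,2)] by (simp add: Q_def)
  obtain A where A: "bij_betw A {..<card Q} Q"
    using ex_bij_betw_nat_finite[OF \<open>finite Q\<close>] by (auto simp: atLeast0LessThan)
  define N where "N = {..<card Q}"
  have A_block: "A i \<in> P" "A i \<inter> R \<noteq> {}" "A i \<subseteq> G" "A i \<noteq> {}" if "i \<in> N" for i
    using A that partition_onD1[OF assms(2)] partition_onD3[OF assms(2)]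
    by (auto simp: N_def Q_def bij_betw_def)
  have "R \<noteq> {}" "R \<subseteq> \<Union>P"
    using partition_onD1[OF assms(3)] partition_onD3[OF assms(3)] partition_onD1[OF assms(2)] assms(4)
    by blast+
  then have "Q \<noteq> {}" unfolding Q_def by blast
  then have "N \<noteq> {}" using \<open>finite Q\<close> by (simp add: N_def lessThan_empty_iff)
  have "W_max G N (\<lambda>i. proj (Union ` Pow P') (single_minded (A i))) = 1"
    using A_block by (intro W_max_single_minded_meeting_block_eq_1[OF assms(1) _ \<open>N \<noteq> {}\<close> assms(3,4)])
      (simp_all add: N_def)
  moreover have "real (card Q) \<le> W_max G N (\<lambda>i. proj (Union ` Pow P) (single_minded (A i)))"
    using W_max_single_minded_blocks_ge_card[OF assms(1) _ assms(2), of N A] A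
    by (simp add: N_def Q_def bij_betw_def)
  moreover have "\<forall>i\<in>N. valuation G (single_minded (A i))"
    using A_block(4) by (simp add: valuation_single_minded)
  ultimately show thesis
    using that[of N "\<lambda>i. single_minded (A i)"] \<open>N \<noteq> {}\<close> unfolding N_def Q_def by simp
qed

theorem proposition4:
  fixes G :: "'g set" and m :: nat
  assumes "finite G" and "1 \<le> m" and "m \<le> card G"
  shows "\<exists>(\<Sigma> :: 'g set set) (\<Sigma>' :: 'g set set) (N :: nat set) (v :: nat \<Rightarrow> 'g set \<Rightarrow> real).
           quasi_field G \<Sigma> \<and> quasi_field G \<Sigma>' \<and>
           card \<Sigma> = 2 ^ m \<and> card \<Sigma>' = 2 ^ m \<and>
           finite N \<and> N \<noteq> {} \<and> (\<forall>i\<in>N. valuation G (v i)) \<and>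
           W_max G N (\<lambda>i. proj \<Sigma>' (v i)) > 0 \<and>
           W_max G N (\<lambda>i. proj \<Sigma> (v i)) / W_max G N (\<lambda>i. proj \<Sigma>' (v i))
             \<ge> real m / real (nat \<lceil>real (m ^ 2) / real (card G)\<rceil>)"
proof -
  obtain P P' R where P: "partition_on G P" "card P = m" and P': "partition_on G P'" "card P' = m"
    and "R \<in> P'" and meeting: "min m (card G - m + 1) \<le> card {A\<in>P. A \<inter> R \<noteq> {}}"
    using exists_partitions_with_block_meeting_many[OF assms] .
  obtain N :: "nat set" and v where N: "finite N" "N \<noteq> {}" "\<forall>i\<in>N. valuation G (v i)"
    and W': "W_max G N (\<lambda>i. proj (Union ` Pow P') (v i)) = 1"
    and W: "real (card {A\<in>P. A \<inter> R \<noteq> {}}) \<le> W_max G N (\<lambda>i. proj (Union ` Pow P) (v i))"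
    using welfare_gap_of_partitions[OF assms(1) P(1) P'(1) \<open>R \<in> P'\<close>] .
  have "real m / real (nat \<lceil>real (m ^ 2) / real (card G)\<rceil>) \<le> real (min m (card G - m + 1))"
    using div_ceiling_square_div_le_min[OF assms(2,3)] .
  also have "\<dots> \<le> W_max G N (\<lambda>i. proj (Union ` Pow P) (v i))"
    using meeting W by linarith
  finally have "real m / real (nat \<lceil>real (m ^ 2) / real (card G)\<rceil>)
      \<le> W_max G N (\<lambda>i. proj (Union ` Pow P) (v i)) / W_max G N (\<lambda>i. proj (Union ` Pow P') (v i))"
    by (simp add: W')
  moreover have "card (Union ` Pow P) = 2 ^ m" "card (Union ` Pow P') = 2 ^ m"
    using card_Union_Pow_partition[OF assms(1) P(1)] card_Union_Pow_partition[OF assms(1) P'(1)]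
      P(2) P'(2) by simp_all
  ultimately show ?thesis
    using quasi_field_Union_Pow_partition[OF P(1)] quasi_field_Union_Pow_partition[OF P'(1)] N W'
    by (intro exI[of _ "Union ` Pow P"] exI[of _ "Union ` Pow P'"] exI[of _ N] exI[of _ v]) simp
qed

end
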